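(* Let $b>a>0$. Let $\mathcal G$ be the set of measurable $g:\mathbb{R}_+\to\mathbb{R}_+$ with $g(s)\le 1/s$ for a.e. $s>0$, and for $g\in\mathcal G$ set $I_a(g)=\int_0^\infty g^{1+a}$, $I_b(g)=\int_0^\infty g^{1+b}$, $\mathcal G_b=\{g\in\mathcal G:0<I_b(g)<\infty\}$. Then $$\sup\{I_b(g)^{-a/b}I_a(g):g\in\mathcal G_b\}=\frac{a+1}{a}\Big[\frac{b}{b+1}\Big]^{a/b},$$ and the supremum is attained at $g(s)=\min\{k,1/s\}$ for any $k>0$. *)

theory Defs
  imports "HOL-Analysis.Analysis"
begin

definition classG :: "(real \<Rightarrow> real) set" where
  "classG = {g. g \<in> borel_measurable lborel \<and> (\<forall>s>0. 0 \<le> g s) \<and>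
               (AE s in lborel. s > 0 \<longrightarrow> g s \<le> 1 / s)}"

definition Ipow :: "real \<Rightarrow> (real \<Rightarrow> real) \<Rightarrow> ennreal" where
  "Ipow p g = (\<integral>\<^sup>+ s. ennreal (g s powr (1 + p)) * indicator {0<..} s \<partial>lborel)"

definition classGb :: "real \<Rightarrow> (real \<Rightarrow> real) set" where
  "classGb b = {g \<in> classG. 0 < Ipow b g \<and> Ipow b g < \<infinity>}"

text \<open>The functional I_b(g)^(-a/b) * I_a(g) (I_b(g) is finite and positive on G_b).\<close>
definition ratioF :: "real \<Rightarrow> real \<Rightarrow> (real \<Rightarrow> real) \<Rightarrow> ennreal" where
  "ratioF a b g = ennreal (enn2real (Ipow b g) powr (- a / b)) * Ipow a g"

end

theory Submission
  imports Defs
begin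

text \<open>The extremal functions are the truncations \<open>g\<^sub>k s = min k (1/s)\<close>. For fixed \<open>k\<close>
the Lagrange function \<open>x\<^bsup>1+a\<^esup> - \<lambda> x\<^bsup>1+b\<^esup>\<close>, with \<open>\<lambda> = (1+a)/(1+b) k\<^bsup>a-b\<^esup>\<close>, increases on
\<open>[0,k]\<close> and decreases on \<open>[k,\<infinity>)\<close>, so on the admissible range \<open>[0,1/s]\<close> it is maximal at
\<open>g\<^sub>k s\<close>. Integrating gives \<open>I\<^sub>a(g) - \<lambda> I\<^sub>b(g) \<le> I\<^sub>a(g\<^sub>k) - \<lambda> I\<^sub>b(g\<^sub>k)\<close>; choosing \<open>k\<close> with
\<open>I\<^sub>b(g\<^sub>k) = I\<^sub>b(g)\<close> yields \<open>I\<^sub>a(g) \<le> I\<^sub>a(g\<^sub>k)\<close>. Finally \<open>I\<^sub>p(g\<^sub>k) = k\<^sup>p (p+1)/p\<close>, so the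
functional takes the same value at every \<open>g\<^sub>k\<close>.\<close>

definition lagrange :: "real \<Rightarrow> real \<Rightarrow> real \<Rightarrow> real \<Rightarrow> real" where
  "lagrange p q k x = x powr p - p / q * k powr (p - q) * x powr q"

lemma has_real_derivative_lagrange:
  assumes "0 < p" "p < q" "0 < k" "0 < x"
  shows "(lagrange p q k has_real_derivative p * x powr (p - 1) * (1 - (x / k) powr (q - p))) (at x)"
proof -
  have "x powr (q - 1) * k powr (p - q) = x powr (p - 1) * (x / k) powr (q - p)"
    using assms by (simp add: powr_divide powr_minus_divide powr_add[symmetric] field_simps)
  then show ?thesis
    unfolding lagrange_def using assms
    by (auto intro!: derivative_eq_intros simp: right_diff_distrib)
qed

lemma continuous_on_lagrange:
  assumes "0 < p" "p < q"
  shows "continuous_on {0..} (lagrange p q k)"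
  unfolding lagrange_def using assms
  by (intro continuous_intros continuous_on_powr') auto

lemma lagrange_mono:
  assumes "0 < p" "p < q" "0 < k" "0 \<le> x" "x \<le> y" "y \<le> k"
  shows "lagrange p q k x \<le> lagrange p q k y"
proof (rule DERIV_nonneg_imp_increasing_open[OF \<open>x \<le> y\<close>])
  fix t assume t: "x < t" "t < y"
  then have "(t / k) powr (q - p) \<le> 1"
    using assms by (intro powr_le1) (auto simp: field_simps)
  then show "\<exists>D. (lagrange p q k has_real_derivative D) (at t) \<and> 0 \<le> D"
    using has_real_derivative_lagrange[of p q k t] t assms by fastforce
qed (use continuous_on_subset[OF continuous_on_lagrange] assms in auto)

lemma lagrange_antimono:
  assumes "0 < p" "p < q" "0 < k" "k \<le> x" "x \<le> y"
  shows "lagrange p q k y \<le> lagrange p q k x"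
proof (rule DERIV_nonpos_imp_decreasing_open[OF \<open>x \<le> y\<close>])
  fix t assume t: "x < t" "t < y"
  then have "1 \<le> (t / k) powr (q - p)"
    using assms by (intro ge_one_powr_ge_zero) (auto simp: field_simps)
  then show "\<exists>D. (lagrange p q k has_real_derivative D) (at t) \<and> D \<le> 0"
    using has_real_derivative_lagrange[of p q k t] t assms
    by (fastforce intro: mult_nonneg_nonpos)
qed (use continuous_on_subset[OF continuous_on_lagrange] assms in auto)

lemma lagrange_le_at_min:
  assumes "0 < p" "p < q" "0 < k" "0 \<le> x" "x \<le> c"
  shows "lagrange p q k x \<le> lagrange p q k (min k c)"
  using assms lagrange_mono[of p q k x "min k c"] lagrange_antimono[of p q k k x]
  by (cases "x \<le> k") (auto simp: min_def)

abbreviation trunc_inverse :: "real \<Rightarrow> real \<Rightarrow> real" where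
  "trunc_inverse k \<equiv> \<lambda>s. min k (1 / s)"

lemma nn_integral_powr_tail:
  assumes "0 < p" "0 < c"
  shows "(\<integral>\<^sup>+ s. ennreal (s powr - (1 + p)) * indicator {c..} s \<partial>lborel) = ennreal (c powr - p / p)"
proof -
  have "((\<lambda>s. s powr - (1 + p)) has_integral - (c powr (- (1 + p) + 1)) / (- (1 + p) + 1)) {c..}"
    using assms by (intro has_integral_powr_to_inf) auto
  also have "- (c powr (- (1 + p) + 1)) / (- (1 + p) + 1) = c powr - p / p"
    by simp
  finally show ?thesis
    by (rule nn_integral_has_integral_lebesgue'[rotated]) auto
qed

lemma trunc_inverse_powr_split:
  assumes "0 < k"
  shows "ennreal (min k (1 / s) powr (1 + p)) * indicator {0<..} s =
      ennreal (k powr (1 + p)) * indicator {0<..<1 / k} s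
      + ennreal (s powr - (1 + p)) * indicator {1 / k..} s"
proof (cases "0 < s")
  case True
  show ?thesis
  proof (cases "s < 1 / k")
    case True
    then have "min k (1 / s) = k"
      using \<open>0 < s\<close> assms by (simp add: field_simps)
    then show ?thesis
      using True \<open>0 < s\<close> by (simp add: indicator_def)
  next
    case False
    then have "min k (1 / s) = 1 / s"
      using \<open>0 < s\<close> assms by (simp add: field_simps)
    moreover have "(1 / s) powr (1 + p) = s powr - (1 + p)"
      by (subst powr_minus_divide) (simp add: powr_divide)
    ultimately have "min k (1 / s) powr (1 + p) = s powr - (1 + p)"
      by simp
    then show ?thesis
      using False \<open>0 < s\<close> by (simp add: indicator_def)
  qed
next
  case False
  moreover have "\<not> 1 / k \<le> s"
    using False assms by (smt (verit) divide_pos_pos)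
  ultimately show ?thesis
    by (simp add: indicator_def)
qed

lemma Ipow_trunc_inverse:
  assumes "0 < p" "0 < k"
  shows "Ipow p (trunc_inverse k) = ennreal (k powr p * (p + 1) / p)"
proof -
  have head: "(\<integral>\<^sup>+ s. ennreal (k powr (1 + p)) * indicator {0<..<1 / k} s \<partial>lborel) = ennreal (k powr p)"
  proof -
    have "k powr (1 + p) * (1 / k) = k powr p"
      using assms by (simp add: powr_add)
    then show ?thesis
      using assms by (simp add: nn_integral_cmult_indicator ennreal_mult[symmetric])
  qed
  have tail: "(\<integral>\<^sup>+ s. ennreal (s powr - (1 + p)) * indicator {1 / k..} s \<partial>lborel) = ennreal (k powr p / p)"
  proof -
    have "(1 / k) powr - p = k powr p"
      using assms by (simp add: powr_divide powr_minus_divide)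
    then show ?thesis
      using nn_integral_powr_tail[of p "1 / k"] assms by simp
  qed
  have "Ipow p (trunc_inverse k) =
      (\<integral>\<^sup>+ s. ennreal (k powr (1 + p)) * indicator {0<..<1 / k} s \<partial>lborel)
      + (\<integral>\<^sup>+ s. ennreal (s powr - (1 + p)) * indicator {1 / k..} s \<partial>lborel)"
    unfolding Ipow_def trunc_inverse_powr_split[OF \<open>0 < k\<close>] by (rule nn_integral_add) auto
  also have "\<dots> = ennreal (k powr p + k powr p / p)"
    unfolding head tail using assms by (simp add: ennreal_plus)
  also have "k powr p + k powr p / p = k powr p * (p + 1) / p"
    using assms by (simp add: field_simps)
  finally show ?thesis .
qed

lemma trunc_inverse_in_classGb:
  assumes "0 < b" "0 < k"
  shows "trunc_inverse k \<in> classGb b"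
  using assms Ipow_trunc_inverse[of b k]
  by (auto simp: classGb_def classG_def intro!: always_eventually)

lemma Ipow_trunc_inverse_onto:
  assumes "0 < b" "0 < B"
  obtains k where "0 < k" "Ipow b (trunc_inverse k) = ennreal B"
proof
  define k where "k = (B * b / (b + 1)) powr (1 / b)"
  show "0 < k"
    using assms by (simp add: k_def)
  have "k powr b = B * b / (b + 1)"
    using assms by (simp add: k_def powr_powr)
  then have "k powr b * (b + 1) / b = B"
    using assms by (simp add: field_simps)
  then show "Ipow b (trunc_inverse k) = ennreal B"
    using assms \<open>0 < k\<close> by (simp add: Ipow_trunc_inverse)
qed

lemma ratioF_trunc_inverse:
  assumes "0 < a" "a < b" "0 < k"
  shows "ratioF a b (trunc_inverse k) = ennreal ((a + 1) / a * (b / (b + 1)) powr (a / b))"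
proof -
  have "(k powr b * (b + 1) / b) powr (- a / b) = (k powr b) powr (- a / b) * ((b + 1) / b) powr (- a / b)"
    using assms by (simp add: powr_mult[symmetric])
  also have "\<dots> = k powr (- a) * (b / (b + 1)) powr (a / b)"
    using assms by (simp add: powr_powr powr_minus powr_divide)
  finally have "(k powr b * (b + 1) / b) powr (- a / b) * (k powr a * (a + 1) / a)
      = (k powr (- a) * k powr a) * ((a + 1) / a * (b / (b + 1)) powr (a / b))"
    by (simp add: algebra_simps)
  also have "k powr (- a) * k powr a = 1"
    using assms by (simp add: powr_add[symmetric])
  finally show ?thesis
    using assms by (simp add: ratioF_def Ipow_trunc_inverse ennreal_mult[symmetric])
qed

lemma Ipow_lagrange_le:
  assumes "-1 < a" "a < b" "0 < k" "g \<in> classG"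
  defines "l \<equiv> (1 + a) / (1 + b) * k powr (a - b)"
  shows "Ipow a g + ennreal l * Ipow b (trunc_inverse k)
    \<le> Ipow a (trunc_inverse k) + ennreal l * Ipow b g"
proof -
  have g_meas: "g \<in> borel_measurable lborel" and g_nonneg: "\<And>s. 0 < s \<Longrightarrow> 0 \<le> g s"
    and g_bound: "AE s in lborel. 0 < s \<longrightarrow> g s \<le> 1 / s"
    using \<open>g \<in> classG\<close> by (auto simp: classG_def)
  have "0 < l"
    using assms by (simp add: l_def)
  have pointwise: "AE s in lborel.
      ennreal (g s powr (1 + a)) * indicator {0<..} s
        + ennreal l * (ennreal (min k (1 / s) powr (1 + b)) * indicator {0<..} s)
    \<le> ennreal (min k (1 / s) powr (1 + a)) * indicator {0<..} s
        + ennreal l * (ennreal (g s powr (1 + b)) * indicator {0<..} s)"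
    using g_bound
  proof eventually_elim
    case (elim s)
    show ?case
    proof (cases "0 < s")
      case True
      then have "lagrange (1 + a) (1 + b) k (g s) \<le> lagrange (1 + a) (1 + b) k (min k (1 / s))"
        using assms elim g_nonneg by (intro lagrange_le_at_min) auto
      then have "g s powr (1 + a) + l * min k (1 / s) powr (1 + b)
          \<le> min k (1 / s) powr (1 + a) + l * g s powr (1 + b)"
        by (simp add: lagrange_def l_def)
      then show ?thesis
        using True \<open>0 < l\<close> by (simp add: ennreal_mult[symmetric] ennreal_plus[symmetric] del: ennreal_plus)
    qed simp
  qed
  have "Ipow a g + ennreal l * Ipow b (trunc_inverse k)
      = (\<integral>\<^sup>+ s. ennreal (g s powr (1 + a)) * indicator {0<..} s
          + ennreal l * (ennreal (min k (1 / s) powr (1 + b)) * indicator {0<..} s) \<partial>lborel)"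
    unfolding Ipow_def using g_meas by (subst nn_integral_add) (auto simp: nn_integral_cmult)
  also have "\<dots> \<le> (\<integral>\<^sup>+ s. ennreal (min k (1 / s) powr (1 + a)) * indicator {0<..} s
          + ennreal l * (ennreal (g s powr (1 + b)) * indicator {0<..} s) \<partial>lborel)"
    by (rule nn_integral_mono_AE[OF pointwise])
  also have "\<dots> = Ipow a (trunc_inverse k) + ennreal l * Ipow b g"
    unfolding Ipow_def using g_meas by (subst nn_integral_add) (auto simp: nn_integral_cmult)
  finally show ?thesis .
qed

lemma Ipow_le_trunc_inverse:
  assumes "0 < a" "a < b" "0 < k" "g \<in> classG"
    and same_b: "Ipow b g = Ipow b (trunc_inverse k)"
  shows "Ipow a g \<le> Ipow a (trunc_inverse k)"
proof -
  define l where "l = (1 + a) / (1 + b) * k powr (a - b)"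
  have "Ipow a g + ennreal l * Ipow b g \<le> Ipow a (trunc_inverse k) + ennreal l * Ipow b g"
    using Ipow_lagrange_le[of a b k g] assms by (simp add: l_def)
  moreover have "ennreal l * Ipow b g \<noteq> \<infinity>"
    using assms Ipow_trunc_inverse[of b k] by (simp add: ennreal_mult_eq_top_iff)
  ultimately show ?thesis
    by (metis add.commute ennreal_add_left_cancel_le)
qed

lemma ratioF_le:
  assumes "0 < a" "a < b" "g \<in> classGb b"
  shows "ratioF a b g \<le> ennreal ((a + 1) / a * (b / (b + 1)) powr (a / b))"
proof -
  define B where "B = enn2real (Ipow b g)"
  have "Ipow b g = ennreal B" and "0 < B"
    using \<open>g \<in> classGb b\<close> by (auto simp: classGb_def B_def ennreal_enn2real_if enn2real_positive_iff)
  obtain k where "0 < k" and level: "Ipow b (trunc_inverse k) = ennreal B"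
    using Ipow_trunc_inverse_onto[of b B] \<open>0 < B\<close> assms by auto
  have same_b: "Ipow b g = Ipow b (trunc_inverse k)"
    using level \<open>Ipow b g = ennreal B\<close> by simp
  have "ratioF a b g = ennreal (B powr (- a / b)) * Ipow a g"
    by (simp add: ratioF_def B_def)
  also have "\<dots> \<le> ennreal (B powr (- a / b)) * Ipow a (trunc_inverse k)"
    using assms \<open>0 < k\<close> same_b by (intro mult_left_mono Ipow_le_trunc_inverse) (auto simp: classGb_def)
  also have "\<dots> = ratioF a b (trunc_inverse k)"
    by (simp add: ratioF_def B_def same_b)
  finally show ?thesis
    using ratioF_trunc_inverse[OF \<open>0 < a\<close> \<open>a < b\<close> \<open>0 < k\<close>] by simp
qed

theorem mainTheorem4:
  fixes a b :: real
  assumes "0 < a" and "a < b"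
  shows "(SUP g \<in> classGb b. ratioF a b g) = ennreal ((a + 1) / a * (b / (b + 1)) powr (a / b))
         \<and> (\<forall>k::real. k > 0 \<longrightarrow>
             (\<lambda>s. min k (1 / s)) \<in> classGb b \<and>
             ratioF a b (\<lambda>s. min k (1 / s)) = ennreal ((a + 1) / a * (b / (b + 1)) powr (a / b)))"
proof -
  have attained: "trunc_inverse k \<in> classGb b \<and>
      ratioF a b (trunc_inverse k) = ennreal ((a + 1) / a * (b / (b + 1)) powr (a / b))" if "0 < k" for k
    using assms that by (simp add: trunc_inverse_in_classGb ratioF_trunc_inverse)
  have "(SUP g \<in> classGb b. ratioF a b g) = ennreal ((a + 1) / a * (b / (b + 1)) powr (a / b))"
  proof (rule antisym)
    show "(SUP g \<in> classGb b. ratioF a b g) \<le> ennreal ((a + 1) / a * (b / (b + 1)) powr (a / b))"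
      using assms by (intro SUP_least ratioF_le)
    show "ennreal ((a + 1) / a * (b / (b + 1)) powr (a / b)) \<le> (SUP g \<in> classGb b. ratioF a b g)"
      using attained[of 1] by (metis SUP_upper zero_less_one)
  qed
  with attained show ?thesis
    by blast
qed

end
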